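(* Let $A\in\mathbb{R}^{n\times n}$ be a constant matrix all of whose eigenvalues are real, and let $C:\mathbb{R}_{\geq0}\to\mathbb{R}^{m\times n}$ be continuous and bounded. Write $A=S+N$ where $S$ is diagonalizable, $N$ is nilpotent with index $s\leq n$, and $SN=NS$ (the Jordan–Chevalley decomposition). Let $\mathcal{O}(t)\in\mathbb{R}^{r\times n}$ ($r>0$) be a matrix whose rows are row vectors chosen from $C(t),\,C(t)N,\,\dots,\,C(t)N^{s-1}$. Suppose there exist constants $\delta,\mu>0$ such that $$\int_t^{t+\delta}\mathcal{O}(\tau)^\top\mathcal{O}(\tau)\,d\tau>\mu I_n\quad\text{for all } t\geq0.$$ Then the pair $(A,C(t))$ is uniformly observable.
   Context: A pair $(A(t),C(t))$ of continuous bounded matrix functions is uniformly observable if there exist $\delta,\mu>0$ such that $\frac1\delta\int_t^{t+\delta}\Phi(\tau,t)^\top C(\tau)^\top C(\tau)\Phi(\tau,t)\,d\tau\geq\mu I_n$ for all $t\geq0$, where $\Phi$ is the state transition matrix of $A(t)$ (for constant $A$, $\Phi(\tau,t)=\exp(A(\tau-t))$). *)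

theory Defs
  imports "HOL-Analysis.Analysis"
begin

primrec mpow :: "'a::semiring_1^'n^'n \<Rightarrow> nat \<Rightarrow> 'a^'n^'n" where
  "mpow M 0 = mat 1"
| "mpow M (Suc k) = M ** mpow M k"

definition mexp :: "real^'n^'n \<Rightarrow> real^'n^'n" where
  "mexp M = (\<Sum>k. (1 / fact k) *\<^sub>R mpow M k)"

definition trans_mat :: "real^'n^'n \<Rightarrow> real \<Rightarrow> real \<Rightarrow> real^'n^'n" where
  "trans_mat A \<tau> t = mexp ((\<tau> - t) *\<^sub>R A)"

definition mat_gt :: "real^'n^'n \<Rightarrow> real^'n^'n \<Rightarrow> bool" where
  "mat_gt X Y \<longleftrightarrow> (\<forall>x. x \<noteq> 0 \<longrightarrow> x \<bullet> ((X - Y) *v x) > 0)"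

definition mat_ge :: "real^'n^'n \<Rightarrow> real^'n^'n \<Rightarrow> bool" where
  "mat_ge X Y \<longleftrightarrow> (\<forall>x. x \<bullet> ((X - Y) *v x) \<ge> 0)"

definition eigenvalue :: "real^'n^'n \<Rightarrow> complex \<Rightarrow> bool" where
  "eigenvalue A c \<longleftrightarrow>
     (\<exists>v::complex^'n. v \<noteq> 0 \<and> (\<chi> i j. complex_of_real (A $ i $ j)) *v v = c *s v)"

definition diagonalizable :: "real^'n^'n \<Rightarrow> bool" where
  "diagonalizable S \<longleftrightarrow>
     (\<exists>P::real^'n^'n. invertible P \<and>
        (\<forall>i j. i \<noteq> j \<longrightarrow> (matrix_inv P ** S ** P) $ i $ j = 0))"

definition nilpotent_index :: "real^'n^'n \<Rightarrow> nat \<Rightarrow> bool" where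
  "nilpotent_index N s \<longleftrightarrow> mpow N s = 0 \<and> (\<forall>k<s. mpow N k \<noteq> 0)"

definition uniformly_observable :: "real^'n^'n \<Rightarrow> (real \<Rightarrow> real^'n^'m) \<Rightarrow> bool" where
  "uniformly_observable A C \<longleftrightarrow>
     (\<exists>\<delta>>0. \<exists>\<mu>>0. \<forall>t\<ge>0.
        mat_ge ((1 / \<delta>) *\<^sub>R integral {t..t+\<delta>}
                  (\<lambda>\<tau>. transpose (trans_mat A \<tau> t) ** transpose (C \<tau>) ** C \<tau> ** trans_mat A \<tau> t))
               (\<mu> *\<^sub>R mat 1))"

end

(*
  Write A = S + N. Expanding exp (b A) y over the eigenvalues l of S gives a finite sum of terms
  b^k e^(b l) / k! times the l-eigencomponent of N^k y (k < s). Hence the direction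
  sgn (exp (b A) y) converges as b tends to infinity to the direction of the dominant coefficient
  (largest l, then largest k), and N annihilates that coefficient. By compactness of the unit
  sphere there is a uniform Lw such that every unit vector y has, starting in [0, Lw], a window of
  length delta on which the direction u of exp (b A) y is almost constant and almost in the kernel
  of N. On that window C N^k u is small for k > 0 and C u is controlled by C exp (b A) y, so the
  excitation condition on the rows of C, C N, ..., C N^(s-1), applied to u, bounds the
  observation energy of y over [0, Lw + delta] from below.
*)

theory Submission
  imports Defs "HOL-Real_Asymp.Real_Asymp"
begin

section \<open>Matrix exponential through a Banach algebra of square matrices\<close>

lemma matrix_mult_add_rdistrib: "(A + B) ** C = A ** C + B ** C"
  for A B :: "'a::semiring_1^'n^'m"
  by (vector matrix_matrix_mult_def sum.distrib[symmetric] field_simps)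

lemma onorm_matrix_le_norm: "onorm ((*v) M) \<le> real CARD('m) * real CARD('n) * norm M"
  for M :: "real^'n^'m"
proof (rule onorm_le_matrix_component)
  fix i j
  have "\<bar>M $ i $ j\<bar> \<le> norm (M $ i)" by (rule component_le_norm_cart)
  also have "\<dots> \<le> norm M" unfolding norm_vec_def[of M] by (rule member_le_L2_set) simp_all
  finally show "\<bar>M $ i $ j\<bar> \<le> norm M" .
qed

lemma norm_matrix_le_onorm: "norm M \<le> real CARD('m) * real CARD('n) * onorm ((*v) M)"
  for M :: "real^'n^'m"
proof -
  have "norm M \<le> (\<Sum>i\<in>UNIV. norm (M $ i))"
    unfolding norm_vec_def by (rule L2_set_le_sum) auto
  also have "\<dots> \<le> (\<Sum>i\<in>(UNIV::'m set). \<Sum>j\<in>(UNIV::'n set). \<bar>M $ i $ j\<bar>)"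
    by (intro sum_mono norm_le_l1_cart)
  also have "\<dots> \<le> (\<Sum>i\<in>(UNIV::'m set). \<Sum>j\<in>(UNIV::'n set). onorm ((*v) M))"
    by (intro sum_mono matrix_component_le_onorm)
  finally show ?thesis by simp
qed

text \<open>On \<^typ>\<open>real^'n^'n\<close> the product is componentwise. This copy carries matrix
  multiplication and the operator norm instead, which makes it a Banach algebra, so the
  library's \<^const>\<open>exp\<close> applies to it.\<close>

typedef 'n sqmat = "UNIV :: (real^'n^'n) set" morphisms mat_of sqmat
  by auto

setup_lifting type_definition_sqmat

instantiation sqmat :: (finite) "{real_normed_vector, ring_1}"
begin

lift_definition zero_sqmat :: "'a sqmat" is 0 .
lift_definition one_sqmat :: "'a sqmat" is "mat 1" .
lift_definition plus_sqmat :: "'a sqmat \<Rightarrow> 'a sqmat \<Rightarrow> 'a sqmat" is "(+)" .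
lift_definition minus_sqmat :: "'a sqmat \<Rightarrow> 'a sqmat \<Rightarrow> 'a sqmat" is "(-)" .
lift_definition uminus_sqmat :: "'a sqmat \<Rightarrow> 'a sqmat" is uminus .
lift_definition times_sqmat :: "'a sqmat \<Rightarrow> 'a sqmat \<Rightarrow> 'a sqmat" is "(**)" .
lift_definition scaleR_sqmat :: "real \<Rightarrow> 'a sqmat \<Rightarrow> 'a sqmat" is scaleR .
lift_definition norm_sqmat :: "'a sqmat \<Rightarrow> real" is "\<lambda>M. onorm ((*v) M)" .

definition sgn_sqmat :: "'a sqmat \<Rightarrow> 'a sqmat"
  where "sgn_sqmat x = inverse (norm x) *\<^sub>R x"

definition dist_sqmat :: "'a sqmat \<Rightarrow> 'a sqmat \<Rightarrow> real"
  where "dist_sqmat x y = norm (x - y)"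

definition uniformity_sqmat :: "('a sqmat \<times> 'a sqmat) filter"
  where "uniformity_sqmat = (INF e\<in>{0<..}. principal {(x, y). dist x y < e})"

definition open_sqmat :: "'a sqmat set \<Rightarrow> bool"
  where "open_sqmat U \<longleftrightarrow> (\<forall>x\<in>U. \<forall>\<^sub>F (x', y) in uniformity. x' = x \<longrightarrow> y \<in> U)"

instance
proof
  fix a b c :: "'a sqmat" and r q :: real
  show "a + b + c = a + (b + c)" by transfer (simp add: algebra_simps)
  show "a + b = b + a" by transfer (simp add: algebra_simps)
  show "0 + a = a" by transfer simp
  show "- a + a = 0" by transfer simp
  show "a - b = a + - b" by transfer simp
  show "r *\<^sub>R (a + b) = r *\<^sub>R a + r *\<^sub>R b" by transfer (simp add: scaleR_right_distrib)
  show "(r + q) *\<^sub>R a = r *\<^sub>R a + q *\<^sub>R a" by transfer (simp add: scaleR_left_distrib)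
  show "r *\<^sub>R q *\<^sub>R a = (r * q) *\<^sub>R a" by transfer simp
  show "1 *\<^sub>R a = a" by transfer simp
  show "dist a b = norm (a - b)" by (simp add: dist_sqmat_def)
  show "sgn a = inverse (norm a) *\<^sub>R a" by (simp add: sgn_sqmat_def)
  show "(uniformity :: ('a sqmat \<times> 'a sqmat) filter) = (INF e\<in>{0<..}. principal {(x, y). dist x y < e})"
    by (simp add: uniformity_sqmat_def)
  show "open U \<longleftrightarrow> (\<forall>x\<in>U. \<forall>\<^sub>F (x', y) in uniformity. x' = x \<longrightarrow> y \<in> U)" for U :: "'a sqmat set"
    by (simp add: open_sqmat_def)
  show "norm a = 0 \<longleftrightarrow> a = 0"
    by transfer (auto simp: onorm_eq_0 matrix_eq)
  show "norm (a + b) \<le> norm a + norm b"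
  proof transfer
    fix a b :: "real^'a^'a"
    have "(*v) (a + b) = (\<lambda>x. a *v x + b *v x)" by (rule ext) (simp add: matrix_vector_mult_add_rdistrib)
    then show "onorm ((*v) (a + b)) \<le> onorm ((*v) a) + onorm ((*v) b)"
      by (simp add: onorm_triangle)
  qed
  show "norm (r *\<^sub>R a) = \<bar>r\<bar> * norm a"
  proof transfer
    fix r and a :: "real^'a^'a"
    have "(*v) (r *\<^sub>R a) = (\<lambda>x. r *\<^sub>R (a *v x))" by (rule ext) (simp add: scaleR_matrix_vector_assoc)
    then show "onorm ((*v) (r *\<^sub>R a)) = \<bar>r\<bar> * onorm ((*v) a)" by (simp add: onorm_scaleR)
  qed
  show "a * b * c = a * (b * c)" by transfer (simp add: matrix_mul_assoc)
  show "(a + b) * c = a * c + b * c" by transfer (rule matrix_mult_add_rdistrib)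
  show "a * (b + c) = a * b + a * c" by transfer (rule matrix_add_ldistrib)
  show "1 * a = a" by transfer simp
  show "a * 1 = a" by transfer simp
  show "(0::'a sqmat) \<noteq> 1" by transfer (simp add: vec_eq_iff mat_def)
qed

end

instance sqmat :: (finite) real_normed_algebra_1
proof
  fix a b :: "'a sqmat" and r :: real
  show "r *\<^sub>R a * b = r *\<^sub>R (a * b)" by transfer (simp add: scalar_matrix_assoc)
  show "a * r *\<^sub>R b = r *\<^sub>R (a * b)" by transfer (simp add: matrix_scalar_ac scalar_matrix_assoc)
  show "norm (a * b) \<le> norm a * norm b"
  proof transfer
    fix a b :: "real^'a^'a"
    have "(*v) (a ** b) = (*v) a \<circ> (*v) b" by (simp add: comp_def matrix_vector_mul_assoc)
    then show "onorm ((*v) (a ** b)) \<le> onorm ((*v) a) * onorm ((*v) b)"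
      by (simp add: onorm_compose)
  qed
  show "norm (1::'a sqmat) = 1"
  proof transfer
    have "(*v) (mat 1 :: real^'a^'a) = (\<lambda>x. x)" by (rule ext) simp
    then show "onorm ((*v) (mat 1 :: real^'a^'a)) = 1" by (simp add: onorm_id)
  qed
qed

lemma bounded_linear_mat_of: "bounded_linear (mat_of :: 'n::finite sqmat \<Rightarrow> real^'n^'n)"
proof
  show "mat_of (x + y) = mat_of x + mat_of y" for x y :: "'n sqmat" by transfer simp
  show "mat_of (r *\<^sub>R x) = r *\<^sub>R mat_of x" for r and x :: "'n sqmat" by transfer simp
  show "\<exists>K. \<forall>x::'n sqmat. norm (mat_of x) \<le> norm x * K"
    by (metis norm_sqmat.rep_eq norm_matrix_le_onorm mult.commute)
qed

lemma bounded_linear_sqmat: "bounded_linear (sqmat :: real^'n::finite^'n \<Rightarrow> 'n sqmat)"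
proof
  show "sqmat (M + K) = sqmat M + sqmat K" for M K :: "real^'n^'n" by (simp add: plus_sqmat.abs_eq)
  show "sqmat (r *\<^sub>R M) = r *\<^sub>R sqmat M" for r and M :: "real^'n^'n" by (simp add: scaleR_sqmat.abs_eq)
  show "\<exists>K. \<forall>M::real^'n^'n. norm (sqmat M) \<le> norm M * K"
    by (metis norm_sqmat.abs_eq onorm_matrix_le_norm mult.commute)
qed

instance sqmat :: (finite) banach
proof
  fix X :: "nat \<Rightarrow> 'a sqmat"
  assume "Cauchy X"
  then have "Cauchy (\<lambda>n. mat_of (X n))" by (rule bounded_linear.Cauchy[OF bounded_linear_mat_of])
  then obtain L where "(\<lambda>n. mat_of (X n)) \<longlonglongrightarrow> L" by (auto simp: Cauchy_convergent_iff convergent_def)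
  then have "(\<lambda>n. sqmat (mat_of (X n))) \<longlonglongrightarrow> sqmat L" by (rule bounded_linear.tendsto[OF bounded_linear_sqmat])
  then show "convergent X" by (auto simp: convergent_def mat_of_inverse)
qed

lemma mat_of_mult: "mat_of (x * y) = mat_of x ** mat_of y" by transfer simp
lemma mat_of_one: "mat_of 1 = mat 1" by transfer simp
lemma mat_of_power: "mat_of (x ^ k) = mpow (mat_of x) k"
  by (induction k) (simp_all add: mat_of_mult mat_of_one)

lemma sqmat_mult: "sqmat (M ** K) = sqmat M * sqmat K" by (simp add: times_sqmat.abs_eq)
lemma sqmat_scaleR: "sqmat (r *\<^sub>R M) = r *\<^sub>R sqmat M" by (simp add: scaleR_sqmat.abs_eq)
lemma sqmat_uminus: "sqmat (- M) = - sqmat M" by (simp add: uminus_sqmat.abs_eq)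

lemma mexp_sums: "(\<lambda>k. (1 / fact k) *\<^sub>R mpow M k) sums mat_of (exp (sqmat M))"
proof -
  have "(\<lambda>k. mat_of (sqmat M ^ k /\<^sub>R fact k)) sums mat_of (exp (sqmat M))"
    by (rule bounded_linear.sums[OF bounded_linear_mat_of exp_converges])
  then show ?thesis by (simp add: mat_of_power scaleR_sqmat.rep_eq sqmat_inverse divide_inverse_commute)
qed

lemma mexp_eq_exp: "mexp M = mat_of (exp (sqmat M))"
  unfolding mexp_def using mexp_sums by (rule sums_unique[symmetric])

lemma mexp_add_commuting: "M ** K = K ** M \<Longrightarrow> mexp (M + K) = mexp M ** mexp K"
  by (simp add: mexp_eq_exp plus_sqmat.abs_eq[symmetric] exp_add_commuting mat_of_mult flip: sqmat_mult)

lemma mexp_neg_mult: "mexp (- M) ** mexp M = mat 1"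
proof -
  have "exp (- sqmat M) * exp (sqmat M) = 1"
    by (simp flip: exp_add_commuting)
  then show ?thesis by (simp add: mexp_eq_exp sqmat_uminus mat_of_one flip: mat_of_mult)
qed

lemma mexp_mult_vector_eq_0_iff: "mexp M *v v = 0 \<longleftrightarrow> v = 0"
  by (metis matrix_vector_mul_assoc matrix_vector_mul_lid matrix_vector_mult_0_right mexp_neg_mult)

lemma continuous_on_mexp_scaleR: "continuous_on U (\<lambda>t. mexp (t *\<^sub>R M))"
proof -
  have "continuous_on U (\<lambda>t. exp (t *\<^sub>R sqmat M))"
    unfolding continuous_on_eq_continuous_within
    using exp_scaleR_has_vector_derivative_right[where A = "sqmat M"]
    by (auto simp: has_vector_derivative_def intro: has_derivative_continuous)
  then have "continuous_on U (\<lambda>t. mat_of (exp (t *\<^sub>R sqmat M)))"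
    by (rule bounded_linear.continuous_on[OF bounded_linear_mat_of])
  then show ?thesis by (simp add: mexp_eq_exp sqmat_scaleR)
qed

lemma mpow_add: "mpow M (a + b) = mpow M a ** mpow M b"
  by (induction a) (simp_all add: matrix_mul_assoc)

lemma mpow_scaleR: "mpow (r *\<^sub>R M) k = r ^ k *\<^sub>R mpow M k"
  for M :: "real^'n^'n"
  by (induction k) (simp_all add: matrix_scalar_ac scalar_matrix_assoc mult.commute)

lemma mpow_eq_0_mono: "mpow N s = 0 \<Longrightarrow> s \<le> k \<Longrightarrow> mpow N k = 0"
  for N :: "real^'n^'n"
  by (metis le_add_diff_inverse2 mpow_add times0_right)

lemma mexp_nilpotent:
  assumes "mpow N s = 0"
  shows "mexp (\<sigma> *\<^sub>R N) = (\<Sum>k<s. (\<sigma> ^ k / fact k) *\<^sub>R mpow N k)"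
proof -
  have "mexp (\<sigma> *\<^sub>R N) = (\<Sum>k<s. (1 / fact k) *\<^sub>R mpow (\<sigma> *\<^sub>R N) k)"
    unfolding mexp_def
    by (rule suminf_finite) (auto simp: mpow_scaleR mpow_eq_0_mono[OF assms])
  then show ?thesis by (simp add: mpow_scaleR)
qed

lemma bounded_linear_matrix_vector_mult_left: "bounded_linear (\<lambda>M::real^'n^'m. M *v v)"
  unfolding linear_conv_bounded_linear[symmetric]
  by (rule linearI) (simp_all add: matrix_vector_mult_add_rdistrib flip: scaleR_matrix_vector_assoc)

lemma mexp_eigenvector:
  assumes "S *v p = d *\<^sub>R p"
  shows "mexp (\<sigma> *\<^sub>R S) *v p = exp (\<sigma> * d) *\<^sub>R p"
proof -
  have mpow: "mpow (\<sigma> *\<^sub>R S) k *v p = (\<sigma> * d) ^ k *\<^sub>R p" for k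
    by (induction k)
      (simp_all add: assms matrix_vector_mult_scaleR power_mult_distrib
        flip: matrix_vector_mul_assoc scaleR_matrix_vector_assoc)
  have "(\<lambda>k. ((1 / fact k) *\<^sub>R mpow (\<sigma> *\<^sub>R S) k) *v p) sums (mexp (\<sigma> *\<^sub>R S) *v p)"
    using mexp_sums[of "\<sigma> *\<^sub>R S"] unfolding mexp_eq_exp[symmetric]
    by (rule bounded_linear.sums[OF bounded_linear_matrix_vector_mult_left])
  moreover have "(\<lambda>k. ((\<sigma> * d) ^ k /\<^sub>R fact k) *\<^sub>R p) sums (exp (\<sigma> * d) *\<^sub>R p)"
    by (rule sums_scaleR_left[OF exp_converges])
  ultimately show ?thesis
    by (simp add: mpow divide_inverse_commute sums_unique2 flip: scaleR_matrix_vector_assoc)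
qed

lemma bounded_matrix_family_vector_bound:
  fixes F :: "'a \<Rightarrow> real^'n^'m"
  assumes "bounded (F ` T)"
  obtains B where "B > 0" "\<And>x v. x \<in> T \<Longrightarrow> norm (F x *v v) \<le> B * norm v"
proof -
  obtain B0 where B0: "B0 > 0" "\<And>x. x \<in> T \<Longrightarrow> norm (F x) \<le> B0"
    using assms by (auto simp: bounded_pos)
  show ?thesis
  proof
    show "real CARD('m) * real CARD('n) * B0 > 0" using B0(1) by simp
    fix x v assume "x \<in> T"
    have "norm (F x *v v) \<le> onorm ((*v) (F x)) * norm v"
      by (rule onorm[OF matrix_vector_mul_bounded_linear])
    also have "\<dots> \<le> real CARD('m) * real CARD('n) * B0 * norm v"
      using onorm_matrix_le_norm[of "F x"] B0(2)[OF \<open>x \<in> T\<close>]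
      by (intro mult_right_mono) (auto intro: order_trans)
    finally show "norm (F x *v v) \<le> real CARD('m) * real CARD('n) * B0 * norm v" .
  qed
qed

lemma mexp_scaleR_lower_bound:
  obtains K where "K > 0" "\<And>b v. b \<in> {lo..hi} \<Longrightarrow> norm v \<le> K * norm (mexp (b *\<^sub>R M) *v v)"
proof -
  have "compact ((\<lambda>b. mexp (- b *\<^sub>R M)) ` {lo..hi})"
    by (intro compact_continuous_image continuous_on_compose2[OF continuous_on_mexp_scaleR]
        continuous_intros) auto
  then obtain K where K: "K > 0" "\<And>b v. b \<in> {lo..hi} \<Longrightarrow> norm (mexp (- b *\<^sub>R M) *v v) \<le> K * norm v"
    using bounded_matrix_family_vector_bound compact_imp_bounded by metis
  show ?thesis
  proof (rule that[OF K(1)])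
    fix b v assume "b \<in> {lo..hi}"
    have "v = mexp (- (b *\<^sub>R M)) *v (mexp (b *\<^sub>R M) *v v)"
      by (simp add: matrix_vector_mul_assoc mexp_neg_mult)
    then show "norm v \<le> K * norm (mexp (b *\<^sub>R M) *v v)"
      using K(2)[OF \<open>b \<in> {lo..hi}\<close>] by (metis scaleR_minus_left)
  qed
qed

lemma continuous_on_matrix_mult[continuous_intros]:
  "continuous_on S F \<Longrightarrow> continuous_on S G \<Longrightarrow> continuous_on S (\<lambda>x. F x ** G x)"
  for F :: "'a::topological_space \<Rightarrow> real^'n^'m"
  unfolding matrix_matrix_mult_def by (intro continuous_intros)

lemma continuous_on_matrix_vector_mult[continuous_intros]:
  "continuous_on S F \<Longrightarrow> continuous_on S g \<Longrightarrow> continuous_on S (\<lambda>x. F x *v g x)"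
  for F :: "'a::topological_space \<Rightarrow> real^'n^'m"
  unfolding matrix_vector_mult_def by (intro continuous_intros)

lemma continuous_on_transpose[continuous_intros]:
  "continuous_on S F \<Longrightarrow> continuous_on S (\<lambda>x. transpose (F x))"
  for F :: "'a::topological_space \<Rightarrow> real^'n^'m"
  unfolding transpose_def by (intro continuous_intros)

lemma continuous_on_row[continuous_intros]:
  "continuous_on S F \<Longrightarrow> continuous_on S (\<lambda>x. row i (F x))"
  for F :: "'a::topological_space \<Rightarrow> real^'n^'m"
  unfolding row_def by (intro continuous_intros)

section \<open>Exponential polynomials and compactness\<close>

lemma finite_lex_max:
  fixes W :: "('a::linorder \<times> 'b::linorder) set"
  assumes "finite W" "W \<noteq> {}"
  obtains L K where "(L, K) \<in> W" "\<And>l k. (l, k) \<in> W \<Longrightarrow> l < L \<or> (l = L \<and> k \<le> K)"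
proof -
  define L where "L = Max (fst ` W)"
  have "L \<in> fst ` W" unfolding L_def using assms by simp
  then have ne: "{k. (L, k) \<in> W} \<noteq> {}" by force
  have fin: "finite {k. (L, k) \<in> W}"
    using finite_imageI[OF assms(1), of snd] by (rule finite_subset[rotated]) force
  define K where "K = Max {k. (L, k) \<in> W}"
  show ?thesis
  proof
    show "(L, K) \<in> W" using Max_in[OF fin ne] by (simp add: K_def)
    fix l k assume lk: "(l, k) \<in> W"
    then have "l \<le> L" unfolding L_def using assms(1) by (intro Max_ge) force+
    moreover have "k \<le> K" if "l = L" using lk that fin by (auto simp: K_def)
    ultimately show "l < L \<or> (l = L \<and> k \<le> K)" by force
  qed
qed

lemma exp_poly_ratio_tendsto_0:
  assumes "l < L \<or> (l = L \<and> k < K)"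
  shows "((\<lambda>\<sigma>::real. (\<sigma> ^ k * exp (\<sigma> * l)) / (\<sigma> ^ K * exp (\<sigma> * L))) \<longlongrightarrow> 0) at_top"
  using assms
proof
  assume "l < L"
  then have "L - l > 0" by simp
  then have "((\<lambda>\<sigma>::real. \<sigma> ^ k / \<sigma> ^ K * exp (- (L - l) * \<sigma>)) \<longlongrightarrow> 0) at_top"
    by real_asymp
  then show ?thesis
    by (rule Lim_transform_eventually) (simp add: field_simps exp_diff flip: exp_add)
next
  assume "l = L \<and> k < K"
  then have "l = L" "k < K" by auto
  then have "K - k > 0" by simp
  then have "((\<lambda>\<sigma>::real. 1 / \<sigma> ^ (K - k)) \<longlongrightarrow> 0) at_top"
    by real_asymp
  then show ?thesis
  proof (rule Lim_transform_eventually)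
    show "\<forall>\<^sub>F \<sigma> in at_top. 1 / \<sigma> ^ (K - k) = \<sigma> ^ k * exp (\<sigma> * l) / (\<sigma> ^ K * exp (\<sigma> * L))"
      using eventually_gt_at_top[of 0]
    proof eventually_elim
      case (elim \<sigma>)
      have "\<sigma> ^ K = \<sigma> ^ k * \<sigma> ^ (K - k)" using \<open>k < K\<close> by (simp flip: power_add)
      then show ?case using elim \<open>l = L\<close> by simp
    qed
  qed
qed

lemma tendsto_sgn_exp_poly_sum:
  fixes c :: "real \<times> nat \<Rightarrow> 'a::real_normed_vector"
  assumes "finite Z" "(L, K) \<in> Z" "c (L, K) \<noteq> 0"
    and dominant: "\<And>l k. (l, k) \<in> Z \<Longrightarrow> c (l, k) \<noteq> 0 \<Longrightarrow> l < L \<or> (l = L \<and> k \<le> K)"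
  shows "((\<lambda>\<sigma>. sgn (\<Sum>(l, k)\<in>Z. (\<sigma> ^ k * exp (\<sigma> * l)) *\<^sub>R c (l, k))) \<longlongrightarrow> sgn (c (L, K))) at_top"
proof -
  define D where "D \<sigma> = \<sigma> ^ K * exp (\<sigma> * L)" for \<sigma> :: real
  have D_pos: "\<forall>\<^sub>F \<sigma> in at_top. D \<sigma> > 0"
    using eventually_gt_at_top[of 0] by eventually_elim (simp add: D_def)
  have summand: "((\<lambda>\<sigma>. (\<sigma> ^ k * exp (\<sigma> * l) / D \<sigma>) *\<^sub>R c (l, k))
      \<longlongrightarrow> (if (l, k) = (L, K) then c (L, K) else 0)) at_top" if "(l, k) \<in> Z" for l k
  proof (cases "(l, k) = (L, K)")
    case True
    have "\<forall>\<^sub>F \<sigma> in at_top. c (L, K) = (\<sigma> ^ K * exp (\<sigma> * L) / D \<sigma>) *\<^sub>R c (L, K)"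
      using D_pos by eventually_elim (simp add: D_def[symmetric])
    with True show ?thesis by (auto intro: Lim_transform_eventually)
  next
    case False
    show ?thesis
    proof (cases "c (l, k) = 0")
      case nonzero: False
      have "l < L \<or> (l = L \<and> k < K)"
        using dominant[OF that nonzero] False by force
      then have "((\<lambda>\<sigma>. \<sigma> ^ k * exp (\<sigma> * l) / D \<sigma>) \<longlongrightarrow> 0) at_top"
        unfolding D_def by (rule exp_poly_ratio_tendsto_0)
      from tendsto_scaleR[OF this tendsto_const[of "c (l, k)"]] False show ?thesis by auto
    qed (use False in auto)
  qed
  have "((\<lambda>\<sigma>. \<Sum>(l, k)\<in>Z. (\<sigma> ^ k * exp (\<sigma> * l) / D \<sigma>) *\<^sub>R c (l, k))
      \<longlongrightarrow> (\<Sum>p\<in>Z. if p = (L, K) then c (L, K) else 0)) at_top"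
  proof (rule tendsto_sum)
    fix p assume "p \<in> Z"
    then show "((\<lambda>\<sigma>. case p of (l, k) \<Rightarrow> (\<sigma> ^ k * exp (\<sigma> * l) / D \<sigma>) *\<^sub>R c (l, k))
        \<longlongrightarrow> (if p = (L, K) then c (L, K) else 0)) at_top"
      using summand by (cases p) simp
  qed
  moreover have "(\<Sum>p\<in>Z. if p = (L, K) then c (L, K) else 0) = c (L, K)"
    using assms(1,2) by simp
  ultimately have "((\<lambda>\<sigma>. (1 / D \<sigma>) *\<^sub>R (\<Sum>(l, k)\<in>Z. (\<sigma> ^ k * exp (\<sigma> * l)) *\<^sub>R c (l, k)))
      \<longlongrightarrow> c (L, K)) at_top"
    by (simp add: scaleR_sum_right case_prod_unfold)
  then have "((\<lambda>\<sigma>. sgn ((1 / D \<sigma>) *\<^sub>R (\<Sum>(l, k)\<in>Z. (\<sigma> ^ k * exp (\<sigma> * l)) *\<^sub>R c (l, k))))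
      \<longlongrightarrow> sgn (c (L, K))) at_top"
    using assms(3) by (rule tendsto_sgn)
  moreover have "\<forall>\<^sub>F \<sigma> in at_top. sgn ((1 / D \<sigma>) *\<^sub>R (\<Sum>(l, k)\<in>Z. (\<sigma> ^ k * exp (\<sigma> * l)) *\<^sub>R c (l, k)))
      = sgn (\<Sum>(l, k)\<in>Z. (\<sigma> ^ k * exp (\<sigma> * l)) *\<^sub>R c (l, k))"
    using D_pos by eventually_elim (simp add: sgn_scaleR)
  ultimately show ?thesis by (rule Lim_transform_eventually)
qed

lemma compact_uniform_witness:
  fixes K :: "'a::topological_space set" and P :: "'a \<Rightarrow> real \<Rightarrow> bool"
  assumes "compact K"
    and local: "\<And>y. y \<in> K \<Longrightarrow> \<exists>a\<ge>0. \<exists>V. open V \<and> y \<in> V \<and> (\<forall>z\<in>K \<inter> V. P z a)"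
  obtains Lw where "Lw \<ge> 0" "\<And>y. y \<in> K \<Longrightarrow> \<exists>a\<in>{0..Lw}. P y a"
proof -
  have "\<forall>y\<in>K. \<exists>a. a \<ge> 0 \<and> (\<exists>V. open V \<and> y \<in> V \<and> (\<forall>z\<in>K \<inter> V. P z a))"
    using local by blast
  from bchoice[OF this] obtain a
    where a: "\<forall>y\<in>K. a y \<ge> 0 \<and> (\<exists>V. open V \<and> y \<in> V \<and> (\<forall>z\<in>K \<inter> V. P z (a y)))"
    by blast
  then have "\<forall>y\<in>K. \<exists>V. open V \<and> y \<in> V \<and> (\<forall>z\<in>K \<inter> V. P z (a y))" by blast
  from bchoice[OF this] obtain V where V: "\<forall>y\<in>K. open (V y) \<and> y \<in> V y \<and> (\<forall>z\<in>K \<inter> V y. P z (a y))"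
    by blast
  then obtain T where T: "T \<subseteq> K" "finite T" "K \<subseteq> (\<Union>y\<in>T. V y)"
    using compactE_image[OF assms(1), of K V] V by blast
  show ?thesis
  proof
    show "Max (insert 0 (a ` T)) \<ge> 0" using T by simp
    fix y assume "y \<in> K"
    then obtain z where "z \<in> T" "y \<in> V z" using T by blast
    then show "\<exists>b\<in>{0..Max (insert 0 (a ` T))}. P y b"
      using a V T \<open>y \<in> K\<close> by (intro bexI[of _ "a z"]) auto
  qed
qed

section \<open>Observation energy\<close>

lemma square_sum_le: "(p + q) ^ 2 \<le> 2 * p ^ 2 + 2 * q ^ 2" for p q :: real
  using zero_le_power2[of "p - q"] by (simp add: power2_diff power2_sum)

lemma inner_gram_matrix: "x \<bullet> ((transpose G ** G) *v x) = norm (G *v x) ^ 2"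
  for G :: "real^'n^'m"
  by (simp add: dot_lmul_matrix[symmetric] matrix_vector_mul_assoc[symmetric] power2_norm_eq_inner
      inner_commute)

lemma inner_integral_gram:
  fixes G :: "real \<Rightarrow> real^'n^'m"
  assumes "continuous_on {a..b} G"
  shows "x \<bullet> (integral {a..b} (\<lambda>\<tau>. transpose (G \<tau>) ** G \<tau>) *v x) = integral {a..b} (\<lambda>\<tau>. norm (G \<tau> *v x) ^ 2)"
proof -
  have "(\<lambda>\<tau>. transpose (G \<tau>) ** G \<tau>) integrable_on {a..b}"
    using assms by (intro integrable_continuous_interval continuous_intros)
  moreover have "bounded_linear (\<lambda>M::real^'n^'n. x \<bullet> (M *v x))"
    by (intro bounded_linear_compose[OF bounded_linear_inner_right] bounded_linear_matrix_vector_mult_left)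
  ultimately have "integral {a..b} ((\<lambda>M. x \<bullet> (M *v x)) \<circ> (\<lambda>\<tau>. transpose (G \<tau>) ** G \<tau>))
      = x \<bullet> (integral {a..b} (\<lambda>\<tau>. transpose (G \<tau>) ** G \<tau>) *v x)"
    by (rule integral_linear)
  then show ?thesis by (simp add: o_def inner_gram_matrix)
qed

lemma norm_selected_rows_le:
  fixes M :: "'r::finite \<Rightarrow> real^'n^'m"
  assumes "\<And>j. norm (M j *v u) \<le> X"
  shows "norm ((\<chi> j. row (i j) (M j)) *v u) ^ 2 \<le> real CARD('r) * X ^ 2"
proof -
  have "norm ((\<chi> j. row (i j) (M j)) *v u) ^ 2 = (\<Sum>j\<in>UNIV. (((\<chi> j. row (i j) (M j)) *v u) $ j) ^ 2)"
    by (simp add: norm_vec_def L2_set_def sum_nonneg)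
  also have "\<dots> = (\<Sum>j\<in>UNIV. ((M j *v u) $ i j) ^ 2)"
    by (simp add: matrix_vector_mult_def row_def)
  also have "\<dots> \<le> (\<Sum>j\<in>(UNIV::'r set). X ^ 2)"
  proof (rule sum_mono)
    fix j
    have "\<bar>(M j *v u) $ i j\<bar> \<le> X" using component_le_norm_cart assms order_trans by blast
    then show "((M j *v u) $ i j) ^ 2 \<le> X ^ 2" by (metis abs_ge_zero power2_abs power_mono)
  qed
  finally show ?thesis by simp
qed

lemma norm_nilpotent_orbit_le:
  fixes M :: "real^'n^'m" and N :: "real^'n^'n"
  assumes M: "\<And>v. norm (M *v v) \<le> B * norm v" and "B \<ge> 0"
    and N: "\<And>k v. k < s \<Longrightarrow> norm (mpow N k *v v) \<le> c * norm v" and "c \<ge> 0"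
    and "k < s" "w \<noteq> 0" "norm (u - sgn w) \<le> \<eta>" "norm (N *v u) \<le> \<eta>"
  shows "norm (M *v (mpow N k *v u)) \<le> norm (M *v w) / norm w + B * (1 + c) * \<eta>"
proof (cases k)
  case 0
  have "norm (M *v u) \<le> norm (M *v sgn w) + norm (M *v (u - sgn w))"
    by (metis add_diff_cancel_left' matrix_vector_right_distrib norm_triangle_ineq diff_add_cancel)
  also have "\<dots> \<le> norm (M *v w) / norm w + B * \<eta>"
    using M[of "u - sgn w"] assms(7) \<open>B \<ge> 0\<close>
    by (intro add_mono) (auto simp: sgn_div_norm matrix_vector_mult_scaleR divide_inverse_commute
        intro: order_trans mult_left_mono)
  moreover have "\<eta> \<ge> 0" using assms(8) by (meson norm_ge_zero order_trans)
  then have "0 \<le> B * (c * \<eta>)" using \<open>B \<ge> 0\<close> \<open>c \<ge> 0\<close> by simp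
  ultimately show ?thesis
    using 0 by (simp add: algebra_simps)
next
  case (Suc j)
  have "mpow N k *v u = mpow N j *v (N *v u)"
    using mpow_add[of N j 1] by (simp add: Suc matrix_vector_mul_assoc)
  then have "norm (M *v (mpow N k *v u)) \<le> B * (c * \<eta>)"
    using M N[of j "N *v u"] assms(5,8) \<open>B \<ge> 0\<close> \<open>c \<ge> 0\<close> Suc
    by (metis Suc_lessD mult_left_mono order_trans)
  moreover have "\<eta> \<ge> 0" using assms(8) by (meson norm_ge_zero order_trans)
  then have "0 \<le> B * \<eta>" using \<open>B \<ge> 0\<close> by simp
  moreover have "0 \<le> norm (M *v w) / norm w" by simp
  moreover have "B * (1 + c) * \<eta> = B * \<eta> + B * (c * \<eta>)" by (simp add: algebra_simps)
  ultimately show ?thesis by linarith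
qed

lemma norm_selected_rows_near_sgn_le:
  fixes M :: "real^'n^'m" and N :: "real^'n^'n" and sel :: "'r::finite \<Rightarrow> 'm \<times> nat"
  assumes M: "\<And>v. norm (M *v v) \<le> B * norm v" and "B \<ge> 0"
    and N: "\<And>k v. k < s \<Longrightarrow> norm (mpow N k *v v) \<le> c * norm v" and "c \<ge> 0"
    and sel: "\<And>j. snd (sel j) < s"
    and "w \<noteq> 0" "1 \<le> K * norm w" "norm (u - sgn w) \<le> \<eta>" "norm (N *v u) \<le> \<eta>"
  shows "norm ((\<chi> j. row (fst (sel j)) (M ** mpow N (snd (sel j)))) *v u) ^ 2
    \<le> real CARD('r) * (2 * K ^ 2 * norm (M *v w) ^ 2 + 2 * (B * (1 + c) * \<eta>) ^ 2)"
proof -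
  have "norm (M *v w) * 1 \<le> norm (M *v w) * (K * norm w)"
    using \<open>1 \<le> K * norm w\<close> by (intro mult_left_mono) auto
  then have "norm (M *v w) / norm w \<le> K * norm (M *v w)"
    using \<open>w \<noteq> 0\<close> by (simp add: divide_le_eq mult_ac)
  moreover have "norm (M *v (mpow N (snd (sel j)) *v u)) \<le> norm (M *v w) / norm w + B * (1 + c) * \<eta>" for j
    by (rule norm_nilpotent_orbit_le[OF M \<open>B \<ge> 0\<close> N \<open>c \<ge> 0\<close> sel]) (use assms(6,8,9) in auto)
  ultimately have "norm ((M ** mpow N (snd (sel j))) *v u) \<le> K * norm (M *v w) + B * (1 + c) * \<eta>" for j
    by (smt (verit) matrix_vector_mul_assoc)
  then have "norm ((\<chi> j. row (fst (sel j)) (M ** mpow N (snd (sel j)))) *v u) ^ 2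
      \<le> real CARD('r) * (K * norm (M *v w) + B * (1 + c) * \<eta>) ^ 2"
    by (rule norm_selected_rows_le)
  also have "\<dots> \<le> real CARD('r) * (2 * K ^ 2 * norm (M *v w) ^ 2 + 2 * (B * (1 + c) * \<eta>) ^ 2)"
    using square_sum_le[of "K * norm (M *v w)" "B * (1 + c) * \<eta>"]
    by (intro mult_left_mono) (simp_all add: power_mult_distrib)
  finally show ?thesis .
qed

lemma mat_gt_integral_gramD:
  fixes G :: "real \<Rightarrow> real^'n^'m"
  assumes "mat_gt (integral {a..b} (\<lambda>\<tau>. transpose (G \<tau>) ** G \<tau>)) (\<mu> *\<^sub>R mat 1)"
    and "continuous_on {a..b} G" "norm u = 1"
  shows "\<mu> < integral {a..b} (\<lambda>\<tau>. norm (G \<tau> *v u) ^ 2)"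
proof -
  have "0 < u \<bullet> ((integral {a..b} (\<lambda>\<tau>. transpose (G \<tau>) ** G \<tau>) - \<mu> *\<^sub>R mat 1) *v u)"
    using assms(1,3) unfolding mat_gt_def by (metis norm_zero zero_neq_one)
  also have "\<dots> = integral {a..b} (\<lambda>\<tau>. norm (G \<tau> *v u) ^ 2) - \<mu>"
    using assms(3)
    by (simp add: matrix_vector_mult_diff_rdistrib inner_diff_right inner_integral_gram[OF assms(2)]
        flip: scaleR_matrix_vector_assoc power2_norm_eq_inner)
  finally show ?thesis by simp
qed

lemma integral_lower_bound_from_window:
  fixes f g :: "real \<Rightarrow> real"
  assumes "\<mu> < integral {a..b} f" "f integrable_on {a..b}" "g integrable_on {c..d}"
    and "{a..b} \<subseteq> {c..d}" "a \<le> b" "\<alpha> > 0"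
    and g_nonneg: "\<And>x. x \<in> {c..d} \<Longrightarrow> 0 \<le> g x"
    and f_le: "\<And>x. x \<in> {a..b} \<Longrightarrow> f x \<le> \<alpha> * g x + \<beta>"
  shows "(\<mu> - \<beta> * (b - a)) / \<alpha> \<le> integral {c..d} g"
proof -
  have "g integrable_on {a..b}"
    using assms(3,4) by (rule integrable_on_subinterval)
  then have int: "(\<lambda>x. \<alpha> * g x + \<beta>) integrable_on {a..b}"
    by (intro integrable_add integrable_on_mult_right integrable_const_ivl)
  note \<open>\<mu> < integral {a..b} f\<close>
  also have "integral {a..b} f \<le> integral {a..b} (\<lambda>x. \<alpha> * g x + \<beta>)"
    by (rule integral_le[OF assms(2) int f_le])
  also have "\<dots> = \<alpha> * integral {a..b} g + \<beta> * (b - a)"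
    using \<open>g integrable_on {a..b}\<close> \<open>a \<le> b\<close>
    by (subst integral_add) (auto intro: integrable_on_mult_right simp: mult.commute)
  also have "\<dots> \<le> \<alpha> * integral {c..d} g + \<beta> * (b - a)"
    using \<open>g integrable_on {a..b}\<close> assms(3,4,6) g_nonneg
    by (intro add_right_mono mult_left_mono integral_subset_le) auto
  finally show ?thesis using \<open>\<alpha> > 0\<close> by (simp add: field_simps)
qed

definition output_energy :: "(real \<Rightarrow> real^'n^'m) \<Rightarrow> real^'n^'n \<Rightarrow> real \<Rightarrow> real^'n \<Rightarrow> real \<Rightarrow> real"
  where "output_energy C A t y \<tau> = norm (C \<tau> *v (trans_mat A \<tau> t *v y)) ^ 2"

lemma uniformly_observableI:
  fixes A :: "real^'n^'n" and C :: "real \<Rightarrow> real^'n^'m"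
  assumes "continuous_on {0..} C" "\<delta> > 0" "\<kappa> > 0"
    and energy: "\<And>t y. t \<ge> 0 \<Longrightarrow> norm y = 1 \<Longrightarrow>
      \<kappa> \<le> integral {t..t + \<delta>} (output_energy C A t y)"
  shows "uniformly_observable A C"
  unfolding uniformly_observable_def
proof (intro exI conjI allI impI)
  fix t :: real assume "t \<ge> 0"
  let ?G = "\<lambda>\<tau>. C \<tau> ** trans_mat A \<tau> t"
  have cont: "continuous_on {t..t + \<delta>} ?G"
    unfolding trans_mat_def using \<open>t \<ge> 0\<close>
    by (intro continuous_intros continuous_on_compose2[OF continuous_on_mexp_scaleR[of UNIV]]
        continuous_on_subset[OF assms(1)]) auto
  have gram: "transpose (trans_mat A \<tau> t) ** transpose (C \<tau>) ** C \<tau> ** trans_mat A \<tau> t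
      = transpose (?G \<tau>) ** ?G \<tau>" for \<tau>
    by (simp add: matrix_transpose_mul matrix_mul_assoc)
  have scaled: "\<kappa> * norm x ^ 2 \<le> integral {t..t + \<delta>} (\<lambda>\<tau>. norm (?G \<tau> *v x) ^ 2)" for x
  proof (cases "x = 0")
    case False
    have "?G \<tau> *v x = norm x *\<^sub>R (C \<tau> *v (trans_mat A \<tau> t *v sgn x))" for \<tau>
      using False by (simp add: sgn_div_norm matrix_vector_mult_scaleR matrix_vector_mul_assoc)
    then have "integral {t..t + \<delta>} (\<lambda>\<tau>. norm (?G \<tau> *v x) ^ 2)
        = norm x ^ 2 * integral {t..t + \<delta>} (\<lambda>\<tau>. norm (C \<tau> *v (trans_mat A \<tau> t *v sgn x)) ^ 2)"
      by (simp add: power_mult_distrib)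
    also have "\<dots> \<ge> norm x ^ 2 * \<kappa>"
      using energy[OF \<open>t \<ge> 0\<close>, of "sgn x"] False by (simp add: norm_sgn output_energy_def[abs_def])
    finally show ?thesis by (simp add: mult.commute)
  qed simp
  show "mat_ge ((1 / \<delta>) *\<^sub>R integral {t..t + \<delta>}
      (\<lambda>\<tau>. transpose (trans_mat A \<tau> t) ** transpose (C \<tau>) ** C \<tau> ** trans_mat A \<tau> t)) ((\<kappa> / \<delta>) *\<^sub>R mat 1)"
    unfolding mat_ge_def gram
  proof
    fix x :: "real^'n"
    have "x \<bullet> (((1 / \<delta>) *\<^sub>R integral {t..t + \<delta>} (\<lambda>\<tau>. transpose (?G \<tau>) ** ?G \<tau>) - (\<kappa> / \<delta>) *\<^sub>R mat 1) *v x)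
        = (integral {t..t + \<delta>} (\<lambda>\<tau>. norm (?G \<tau> *v x) ^ 2) - \<kappa> * norm x ^ 2) / \<delta>"
      by (simp add: matrix_vector_mult_diff_rdistrib inner_diff_right inner_integral_gram[OF cont]
          diff_divide_distrib flip: scaleR_matrix_vector_assoc power2_norm_eq_inner)
    also have "\<dots> \<ge> 0" using scaled[of x] \<open>\<delta> > 0\<close> by simp
    finally show "0 \<le> x \<bullet> (((1 / \<delta>) *\<^sub>R integral {t..t + \<delta>} (\<lambda>\<tau>. transpose (?G \<tau>) ** ?G \<tau>) - (\<kappa> / \<delta>) *\<^sub>R mat 1) *v x)" .
  qed
qed (use assms in auto)

section \<open>Asymptotic direction of the flow of a Jordan--Chevalley pair\<close>

lemma invertible_matrix_inv: "invertible P \<Longrightarrow> P ** matrix_inv P = mat 1"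
  using someI_ex[of "\<lambda>P'. P ** P' = mat 1 \<and> P' ** P = mat 1"] by (auto simp: invertible_def matrix_inv_def)

lemma diagonal_commute_entry_eq_0:
  fixes D M :: "real^'n^'n"
  assumes "D ** M = M ** D" and D: "\<And>i j. D $ i $ j = (if i = j then e i else 0)" and "e i \<noteq> e j"
  shows "M $ i $ j = 0"
proof -
  have "(D ** M) $ i $ j = e i * M $ i $ j" "(M ** D) $ i $ j = M $ i $ j * e j"
    by (simp_all add: matrix_matrix_mult_def D if_distrib if_distribR cong: if_cong)
  with assms(1,3) show ?thesis by (simp add: mult.commute)
qed

lemma diagonal_matrix_vector_mult:
  fixes D :: "real^'n^'n"
  assumes "\<And>i j. D $ i $ j = (if i = j then e i else 0)"
  shows "D *v x = (\<chi> i. e i * x $ i)"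
  by (simp add: vec_eq_iff matrix_vector_mult_def assms if_distrib[of "\<lambda>a. a * _"] cong: if_cong)

lemma masked_matrix_vector_mult:
  fixes M :: "real^'n^'n"
  assumes "\<And>i j. e i \<noteq> e j \<Longrightarrow> M $ i $ j = 0"
  shows "M *v (\<chi> i. if e i = l then w $ i else 0) = (\<chi> i. if e i = l then (M *v w) $ i else 0)"
proof -
  have "M $ i $ j * (if e j = l then w $ j else 0) = (if e i = l then M $ i $ j * w $ j else 0)" for i j
    using assms[of i j] by (cases "e i = e j") auto
  then show ?thesis
    by (simp add: vec_eq_iff matrix_vector_mult_def sum.If_cases)
qed

locale jordan_chevalley =
  fixes S N P :: "real^'n::finite^'n" and s :: nat
  assumes invertible_P: "invertible P"
    and diagonalizes: "\<And>i j. i \<noteq> j \<Longrightarrow> (matrix_inv P ** S ** P) $ i $ j = 0"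
    and commute: "S ** N = N ** S"
    and nilpotent: "mpow N s = 0"
begin

definition eigval :: "'n \<Rightarrow> real"
  where "eigval i = (matrix_inv P ** S ** P) $ i $ i"

definition eigencomp :: "real \<Rightarrow> real^'n \<Rightarrow> real^'n"
  where "eigencomp l v = P *v (\<chi> i. if eigval i = l then (matrix_inv P *v v) $ i else 0)"

lemma P_inv: "P ** matrix_inv P = mat 1"
  using invertible_matrix_inv[OF invertible_P] .

lemma conj_S_entry: "(matrix_inv P ** S ** P) $ i $ j = (if i = j then eigval i else 0)"
  using diagonalizes[of i j] by (auto simp: eigval_def)

lemma conj_N_entry_eq_0:
  assumes "eigval i \<noteq> eigval j"
  shows "(matrix_inv P ** N ** P) $ i $ j = 0"
proof -
  let ?D = "matrix_inv P ** S ** P" and ?M = "matrix_inv P ** N ** P"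
  have "?D ** ?M = matrix_inv P ** (S ** (P ** matrix_inv P) ** N) ** P"
    by (simp add: matrix_mul_assoc)
  also have "\<dots> = matrix_inv P ** (N ** (P ** matrix_inv P) ** S) ** P"
    by (simp add: P_inv commute)
  also have "\<dots> = ?M ** ?D"
    by (simp add: matrix_mul_assoc)
  finally show ?thesis
    using conj_S_entry assms by (rule diagonal_commute_entry_eq_0)
qed

lemma S_eigencomp: "S *v eigencomp l v = l *\<^sub>R eigencomp l v"
proof -
  define m where "m = (\<chi> i. if eigval i = l then (matrix_inv P *v v) $ i else 0)"
  have Dm: "(matrix_inv P ** S ** P) *v m = l *\<^sub>R m"
    by (simp add: diagonal_matrix_vector_mult[OF conj_S_entry] m_def vec_eq_iff)
  have "S *v eigencomp l v = (S ** P) *v m"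
    by (simp add: eigencomp_def m_def matrix_vector_mul_assoc)
  also have "S ** P = P ** (matrix_inv P ** S ** P)"
    by (simp add: matrix_mul_assoc P_inv)
  also have "\<dots> *v m = P *v (l *\<^sub>R m)"
    by (simp only: Dm matrix_vector_mul_assoc[of P, symmetric])
  also have "\<dots> = l *\<^sub>R eigencomp l v"
    by (simp add: eigencomp_def m_def matrix_vector_mult_scaleR)
  finally show ?thesis .
qed

lemma N_eigencomp: "N *v eigencomp l v = eigencomp l (N *v v)"
proof -
  define M where "M = matrix_inv P ** N ** P"
  define w where "w = matrix_inv P *v v"
  have "N *v eigencomp l v = (N ** P) *v (\<chi> i. if eigval i = l then w $ i else 0)"
    unfolding eigencomp_def w_def by (simp add: matrix_vector_mul_assoc)
  also have "N ** P = P ** M"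
    by (simp add: M_def matrix_mul_assoc P_inv)
  also have "\<dots> *v (\<chi> i. if eigval i = l then w $ i else 0)
      = P *v (\<chi> i. if eigval i = l then (M *v w) $ i else 0)"
  proof -
    have "M *v (\<chi> i. if eigval i = l then w $ i else 0) = (\<chi> i. if eigval i = l then (M *v w) $ i else 0)"
      by (rule masked_matrix_vector_mult) (simp add: M_def conj_N_entry_eq_0)
    then show ?thesis by (simp only: matrix_vector_mul_assoc[of P, symmetric])
  qed
  also have "M *v w = matrix_inv P *v (N *v v)"
    unfolding M_def w_def matrix_vector_mul_assoc
    by (simp add: matrix_mul_assoc[of _ P] P_inv flip: matrix_mul_assoc)
  finally show ?thesis
    by (simp add: eigencomp_def)
qed

lemma sum_eigencomp: "(\<Sum>l\<in>range eigval. eigencomp l v) = v"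
proof -
  have "(\<Sum>l\<in>range eigval. \<chi> i. if eigval i = l then (matrix_inv P *v v) $ i else 0) = matrix_inv P *v v"
    by (simp add: vec_eq_iff sum_component)
  then have "(\<Sum>l\<in>range eigval. eigencomp l v) = P *v (matrix_inv P *v v)"
    by (simp add: eigencomp_def linear_sum[OF matrix_vector_mul_linear, symmetric])
  then show ?thesis by (simp add: matrix_vector_mul_assoc P_inv)
qed

lemma eigencomp_0: "eigencomp l 0 = 0"
proof -
  have "(\<chi> i. if eigval i = l then (matrix_inv P *v 0) $ i else 0) = 0" by (simp add: vec_eq_iff)
  then show ?thesis by (simp add: eigencomp_def)
qed

lemma mexp_S_apply: "mexp (\<sigma> *\<^sub>R S) *v v = (\<Sum>l\<in>range eigval. exp (\<sigma> * l) *\<^sub>R eigencomp l v)"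
proof -
  have "mexp (\<sigma> *\<^sub>R S) *v v = (\<Sum>l\<in>range eigval. mexp (\<sigma> *\<^sub>R S) *v eigencomp l v)"
    by (simp add: sum_eigencomp linear_sum[OF matrix_vector_mul_linear, symmetric])
  then show ?thesis by (simp add: mexp_eigenvector[OF S_eigencomp])
qed

lemma mexp_expansion:
  "mexp (\<sigma> *\<^sub>R (S + N)) *v y
    = (\<Sum>(l, k)\<in>range eigval \<times> {..<s}. (\<sigma> ^ k * exp (\<sigma> * l)) *\<^sub>R ((1 / fact k) *\<^sub>R eigencomp l (mpow N k *v y)))"
proof -
  have "(\<sigma> *\<^sub>R S) ** (\<sigma> *\<^sub>R N) = (\<sigma> *\<^sub>R N) ** (\<sigma> *\<^sub>R S)"
    by (simp add: matrix_scalar_ac commute flip: scalar_matrix_assoc)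
  then have "mexp (\<sigma> *\<^sub>R (S + N)) *v y = mexp (\<sigma> *\<^sub>R S) *v (mexp (\<sigma> *\<^sub>R N) *v y)"
    by (simp add: scaleR_add_right mexp_add_commuting matrix_vector_mul_assoc)
  also have "mexp (\<sigma> *\<^sub>R N) *v y = (\<Sum>k<s. (\<sigma> ^ k / fact k) *\<^sub>R (mpow N k *v y))"
    by (simp add: mexp_nilpotent[OF nilpotent] scaleR_matrix_vector_assoc
        linear_sum[OF bounded_linear_matrix_vector_mult_left[THEN bounded_linear.linear]])
  also have "mexp (\<sigma> *\<^sub>R S) *v \<dots>
      = (\<Sum>k<s. \<Sum>l\<in>range eigval. (\<sigma> ^ k * exp (\<sigma> * l)) *\<^sub>R ((1 / fact k) *\<^sub>R eigencomp l (mpow N k *v y)))"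
    by (simp add: linear_sum[OF matrix_vector_mul_linear] matrix_vector_mult_scaleR mexp_S_apply
        scaleR_sum_right mult.commute)
  also have "\<dots> = (\<Sum>(l, k)\<in>range eigval \<times> {..<s}. (\<sigma> ^ k * exp (\<sigma> * l)) *\<^sub>R ((1 / fact k) *\<^sub>R eigencomp l (mpow N k *v y)))"
    by (subst sum.swap) (simp add: sum.cartesian_product)
  finally show ?thesis .
qed

lemma nilpotency_index_pos: "s > 0"
proof (rule ccontr)
  assume "\<not> s > 0"
  then have "(mat 1 :: real^'n^'n) = 0" using nilpotent by simp
  then have "(mat 1 :: real^'n^'n) $ undefined $ undefined = 0" by simp
  then show False by (simp add: mat_def)
qed

lemma flow_direction_limit:
  assumes "y \<noteq> 0"
  obtains U where "((\<lambda>b. sgn (mexp (b *\<^sub>R (S + N)) *v y)) \<longlongrightarrow> U) at_top" "norm U = 1" "N *v U = 0"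
proof -
  define c where "c = (\<lambda>(l, k). (1 / fact k) *\<^sub>R eigencomp l (mpow N k *v y))"
  define W where "W = {p \<in> range eigval \<times> {..<s}. c p \<noteq> 0}"
  have "finite W" by (simp add: W_def)
  obtain l0 where "l0 \<in> range eigval" "eigencomp l0 y \<noteq> 0"
    using sum_eigencomp[of y] assms by (metis (no_types, lifting) sum.neutral)
  then have "(l0, 0) \<in> W" using nilpotency_index_pos by (simp add: W_def c_def)
  then obtain L K where LK: "(L, K) \<in> W" and max: "\<And>l k. (l, k) \<in> W \<Longrightarrow> l < L \<or> (l = L \<and> k \<le> K)"
    using finite_lex_max[OF \<open>finite W\<close>] by blast
  have "((\<lambda>b. sgn (\<Sum>(l, k)\<in>range eigval \<times> {..<s}. (b ^ k * exp (b * l)) *\<^sub>R c (l, k))) \<longlongrightarrow> sgn (c (L, K))) at_top"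
    using LK max by (intro tendsto_sgn_exp_poly_sum) (auto simp: W_def)
  then have lim: "((\<lambda>b. sgn (mexp (b *\<^sub>R (S + N)) *v y)) \<longlongrightarrow> sgn (c (L, K))) at_top"
    by (simp add: mexp_expansion c_def)
  \<comment> \<open>\<open>N\<close> shifts the coefficient of \<open>(L, K)\<close> to that of \<open>(L, K + 1)\<close>, which vanishes by
    the maximality of \<open>(L, K)\<close>.\<close>
  have "N *v c (L, K) = (1 / fact K) *\<^sub>R eigencomp L (mpow N (Suc K) *v y)"
    by (simp add: c_def N_eigencomp matrix_vector_mul_assoc matrix_vector_mult_scaleR)
  also have "eigencomp L (mpow N (Suc K) *v y) = 0"
  proof (cases "Suc K < s")
    case True
    then have "(L, Suc K) \<notin> W" using max[of L "Suc K"] by force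
    with True LK show ?thesis by (auto simp: W_def c_def)
  next
    case False
    then have "mpow N (Suc K) = 0" by (intro mpow_eq_0_mono[OF nilpotent]) simp
    then show ?thesis by (simp only: matrix_vector_mult_0 eigencomp_0)
  qed
  finally have "N *v c (L, K) = 0" by simp
  show ?thesis
  proof (rule that[OF lim])
    show "norm (sgn (c (L, K))) = 1" using LK by (simp add: W_def norm_sgn)
    show "N *v sgn (c (L, K)) = 0" by (simp add: sgn_div_norm matrix_vector_mult_scaleR \<open>N *v c (L, K) = 0\<close>)
  qed
qed

definition steady_window :: "real \<Rightarrow> real \<Rightarrow> real^'n \<Rightarrow> real \<Rightarrow> bool"
  where "steady_window \<eta> \<delta> y a \<longleftrightarrow>
    (\<forall>\<sigma>\<in>{0..\<delta>}. norm (sgn (mexp ((a + \<sigma>) *\<^sub>R (S + N)) *v y) - sgn (mexp (a *\<^sub>R (S + N)) *v y)) \<le> \<eta>)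
    \<and> norm (N *v sgn (mexp (a *\<^sub>R (S + N)) *v y)) \<le> \<eta>"

lemma steady_window_nhd:
  assumes "\<eta> > 0" "\<delta> \<ge> 0" "y0 \<in> sphere 0 1"
  shows "\<exists>a\<ge>0. \<exists>V. open V \<and> y0 \<in> V \<and> (\<forall>z\<in>sphere 0 1 \<inter> V. steady_window \<eta> \<delta> z a)"
proof -
  define F where "F p = sgn (mexp (snd p *\<^sub>R (S + N)) *v fst p)" for p :: "(real^'n) \<times> real"
  obtain U where U: "((\<lambda>b. F (y0, b)) \<longlongrightarrow> U) at_top" "norm U = 1" "N *v U = 0"
    using flow_direction_limit[of y0] assms(3) by (force simp: F_def)
  define KN where "KN = onorm ((*v) N)"
  have "KN \<ge> 0" unfolding KN_def by (rule onorm_pos_le[OF matrix_vector_mul_bounded_linear])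
  define \<epsilon> where "\<epsilon> = \<eta> / (4 * (1 + KN))"
  have "\<epsilon> > 0" using \<open>\<eta> > 0\<close> \<open>KN \<ge> 0\<close> by (simp add: \<epsilon>_def)
  have "\<forall>\<^sub>F b in at_top. dist (F (y0, b)) U < \<epsilon>"
    using tendstoD[OF U(1) \<open>\<epsilon> > 0\<close>] .
  then obtain b0 where "\<And>b. b \<ge> b0 \<Longrightarrow> dist (F (y0, b)) U < \<epsilon>"
    by (auto simp: eventually_at_top_linorder)
  then obtain a0 where "a0 \<ge> 0" and a0: "\<And>b. b \<ge> a0 \<Longrightarrow> norm (F (y0, b) - U) < \<epsilon>"
    by (metis dist_norm max.bounded_iff max.cobounded2)
  have "continuous_on (sphere 0 1 \<times> {a0..a0 + \<delta>}) F"
    unfolding F_def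
    by (intro continuous_intros continuous_on_compose2[OF continuous_on_mexp_scaleR])
      (auto simp: mexp_mult_vector_eq_0_iff)
  then have "uniformly_continuous_on (sphere 0 1 \<times> {a0..a0 + \<delta>}) F"
    by (intro compact_uniformly_continuous compact_Times compact_sphere compact_Icc)
  then obtain \<rho> where "\<rho> > 0" and \<rho>: "\<And>p q. p \<in> sphere 0 1 \<times> {a0..a0 + \<delta>} \<Longrightarrow>
      q \<in> sphere 0 1 \<times> {a0..a0 + \<delta>} \<Longrightarrow> dist q p < \<rho> \<Longrightarrow> dist (F q) (F p) < \<epsilon>"
    unfolding uniformly_continuous_on_def using \<open>\<epsilon> > 0\<close> by metis
  have near_U: "norm (F (z, b) - U) \<le> 2 * \<epsilon>"
    if "z \<in> sphere 0 1" "dist z y0 < \<rho>" "b \<in> {a0..a0 + \<delta>}" for z b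
  proof -
    have "dist (F (z, b)) (F (y0, b)) < \<epsilon>"
      using \<rho>[of "(y0, b)" "(z, b)"] that assms(3) by (simp add: dist_Pair_Pair)
    moreover have "norm (F (y0, b) - U) < \<epsilon>" using a0 that(3) by simp
    ultimately show ?thesis
      using norm_diff_triangle_le[of "F (z, b)" "F (y0, b)" \<epsilon> U \<epsilon>] by (simp add: dist_norm)
  qed
  show ?thesis
    unfolding steady_window_def
  proof (intro exI conjI ballI)
    fix z assume z: "z \<in> sphere 0 1 \<inter> ball y0 \<rho>"
    then have near: "b \<in> {a0..a0 + \<delta>} \<Longrightarrow> norm (F (z, b) - U) \<le> 2 * \<epsilon>" for b
      by (intro near_U) (auto simp: dist_commute)
    have "4 * \<epsilon> \<le> \<eta>" "KN * (2 * \<epsilon>) \<le> \<eta>"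
      using \<open>\<eta> > 0\<close> \<open>KN \<ge> 0\<close> by (auto simp: \<epsilon>_def field_simps)
    show "norm (sgn (mexp ((a0 + \<sigma>) *\<^sub>R (S + N)) *v z) - sgn (mexp (a0 *\<^sub>R (S + N)) *v z)) \<le> \<eta>"
      if "\<sigma> \<in> {0..\<delta>}" for \<sigma>
      using norm_diff_triangle_le[of "F (z, a0 + \<sigma>)" U "2 * \<epsilon>" "F (z, a0)" "2 * \<epsilon>"]
        near[of "a0 + \<sigma>"] near[of a0] that \<open>\<delta> \<ge> 0\<close> \<open>4 * \<epsilon> \<le> \<eta>\<close>
      by (simp add: F_def norm_minus_commute)
    have "norm (N *v sgn (mexp (a0 *\<^sub>R (S + N)) *v z)) = norm (N *v (F (z, a0) - U))"
      using U(3) by (simp add: F_def matrix_vector_mult_diff_distrib)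
    also have "\<dots> \<le> KN * norm (F (z, a0) - U)"
      unfolding KN_def by (rule onorm[OF matrix_vector_mul_bounded_linear])
    also have "\<dots> \<le> KN * (2 * \<epsilon>)"
      using near[of a0] \<open>\<delta> \<ge> 0\<close> \<open>KN \<ge> 0\<close> by (intro mult_left_mono) auto
    finally show "norm (N *v sgn (mexp (a0 *\<^sub>R (S + N)) *v z)) \<le> \<eta>" using \<open>KN * (2 * \<epsilon>) \<le> \<eta>\<close> by simp
  qed (use \<open>a0 \<ge> 0\<close> \<open>\<rho> > 0\<close> in auto)
qed

lemma uniform_steady_window:
  assumes "\<eta> > 0" "\<delta> \<ge> 0"
  obtains Lw where "Lw \<ge> 0" "\<And>y. norm y = 1 \<Longrightarrow> \<exists>a\<in>{0..Lw}. steady_window \<eta> \<delta> y a"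
  using compact_uniform_witness[OF compact_sphere steady_window_nhd[OF assms]] by auto

end

section \<open>Excitation of the selected rows forces observability\<close>

locale excited_observation = jordan_chevalley S N P s
  for S N P :: "real^'n::finite^'n" and s :: nat +
  fixes C :: "real \<Rightarrow> real^'n^'m" and sel :: "'r::finite \<Rightarrow> 'm \<times> nat" and \<O> :: "real \<Rightarrow> real^'n^'r"
    and B \<delta> \<mu> :: real
  assumes C_cont: "continuous_on {0..} C"
    and C_bound: "\<And>\<tau> v. \<tau> \<ge> 0 \<Longrightarrow> norm (C \<tau> *v v) \<le> B * norm v" and B_pos: "B > 0"
    and sel_lt: "\<And>j. snd (sel j) < s"
    and O_def: "\<And>\<tau>. \<O> \<tau> = (\<chi> j. row (fst (sel j)) (C \<tau> ** mpow N (snd (sel j))))"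
    and excitation: "\<And>t u. t \<ge> 0 \<Longrightarrow> norm u = 1 \<Longrightarrow> \<mu> < integral {t..t + \<delta>} (\<lambda>\<tau>. norm (\<O> \<tau> *v u) ^ 2)"
    and \<delta>_pos: "\<delta> > 0" and \<mu>_pos: "\<mu> > 0"
begin

lemma output_energy_integrable: "0 \<le> t \<Longrightarrow> t \<le> lo \<Longrightarrow> output_energy C (S + N) t y integrable_on {lo..hi}"
  unfolding output_energy_def trans_mat_def
  by (intro integrable_continuous_interval continuous_intros
      continuous_on_compose2[OF continuous_on_mexp_scaleR[of UNIV]] continuous_on_subset[OF C_cont]) auto

lemma excitation_integrable: "0 \<le> lo \<Longrightarrow> (\<lambda>\<tau>. norm (\<O> \<tau> *v u) ^ 2) integrable_on {lo..hi}"
  unfolding O_def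
  by (intro integrable_continuous_interval continuous_intros continuous_on_subset[OF C_cont]) auto

lemma excitation_le_energy_on_window:
  assumes "0 \<le> t" "0 \<le> a" "\<tau> \<in> {t + a..t + a + \<delta>}" "y \<noteq> 0"
    and steady: "steady_window \<eta> \<delta> y a"
    and lower: "1 \<le> K * norm (mexp ((\<tau> - t) *\<^sub>R (S + N)) *v y)"
    and c: "\<And>k v. k < s \<Longrightarrow> norm (mpow N k *v v) \<le> c * norm v" "c \<ge> 0"
  shows "norm (\<O> \<tau> *v sgn (mexp (a *\<^sub>R (S + N)) *v y)) ^ 2
    \<le> real CARD('r) * (2 * K ^ 2 * output_energy C (S + N) t y \<tau> + 2 * (B * (1 + c) * \<eta>) ^ 2)"
proof -
  have "\<tau> \<ge> 0" using assms(1-3) by auto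
  define w where "w = mexp ((\<tau> - t) *\<^sub>R (S + N)) *v y"
  have "w \<noteq> 0" using \<open>y \<noteq> 0\<close> by (simp add: w_def mexp_mult_vector_eq_0_iff)
  have kernel: "norm (N *v sgn (mexp (a *\<^sub>R (S + N)) *v y)) \<le> \<eta>"
    using steady unfolding steady_window_def by blast
  have "norm (sgn (mexp (a *\<^sub>R (S + N)) *v y) - sgn w) \<le> \<eta>"
    using steady assms(3) unfolding steady_window_def
    by (auto simp: w_def norm_minus_commute dest!: bspec[of _ _ "\<tau> - t - a"])
  then show ?thesis
    unfolding O_def output_energy_def trans_mat_def w_def[symmetric]
    using norm_selected_rows_near_sgn_le[OF C_bound[OF \<open>\<tau> \<ge> 0\<close>] _ c(1) c(2) sel_lt \<open>w \<noteq> 0\<close>]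
      B_pos lower kernel by (simp add: w_def)
qed

lemma energy_lower_bound:
  obtains \<delta>' \<kappa> where "\<delta>' > 0" "\<kappa> > 0"
    "\<And>t y. t \<ge> 0 \<Longrightarrow> norm y = 1 \<Longrightarrow> \<kappa> \<le> integral {t..t + \<delta>'} (output_energy C (S + N) t y)"
proof -
  obtain c where "c > 0" and c: "\<And>k v. k < s \<Longrightarrow> norm (mpow N k *v v) \<le> c * norm v"
    using bounded_matrix_family_vector_bound[of "mpow N" "{..<s}"] by (auto intro: finite_imp_bounded)
  define R where "R = real CARD('r)"
  define \<beta> where "\<beta> = B * (1 + c)"
  \<comment> \<open>\<open>\<eta>\<close> is tuned so that, on a steady window, the error terms add at most \<open>\<mu> / 2\<close> to the
    excitation integral.\<close>
  define \<eta> where "\<eta> = sqrt (\<mu> / (4 * R * \<delta>)) / \<beta>"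
  have "R > 0" "\<beta> > 0" using B_pos \<open>c > 0\<close> by (simp_all add: R_def \<beta>_def)
  then have "\<eta> > 0" using \<mu>_pos \<delta>_pos by (simp add: \<eta>_def)
  have \<eta>_sq: "R * (2 * (\<beta> * \<eta>) ^ 2) * \<delta> = \<mu> / 2"
    using \<open>R > 0\<close> \<open>\<beta> > 0\<close> \<mu>_pos \<delta>_pos by (simp add: \<eta>_def power_divide)
  obtain Lw where "Lw \<ge> 0" and window: "\<And>y. norm y = 1 \<Longrightarrow> \<exists>a\<in>{0..Lw}. steady_window \<eta> \<delta> y a"
    using uniform_steady_window[OF \<open>\<eta> > 0\<close>, of \<delta>] \<delta>_pos by auto
  obtain K where "K > 0" and K: "\<And>b v. b \<in> {0..Lw + \<delta>} \<Longrightarrow> norm v \<le> K * norm (mexp (b *\<^sub>R (S + N)) *v v)"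
    using mexp_scaleR_lower_bound by blast
  show ?thesis
  proof (rule that[of "Lw + \<delta>" "\<mu> / (4 * R * K ^ 2)"])
    show "Lw + \<delta> > 0" "\<mu> / (4 * R * K ^ 2) > 0"
      using \<open>Lw \<ge> 0\<close> \<delta>_pos \<mu>_pos \<open>R > 0\<close> \<open>K > 0\<close> by simp_all
    fix t :: real and y :: "real^'n" assume "t \<ge> 0" "norm y = 1"
    obtain a where a: "a \<in> {0..Lw}" and steady: "steady_window \<eta> \<delta> y a"
      using window[OF \<open>norm y = 1\<close>] by blast
    define u where "u = sgn (mexp (a *\<^sub>R (S + N)) *v y)"
    have "norm u = 1"
      using \<open>norm y = 1\<close> by (auto simp: u_def norm_sgn mexp_mult_vector_eq_0_iff)
    have pointwise: "norm (\<O> \<tau> *v u) ^ 2 \<le> 2 * R * K ^ 2 * output_energy C (S + N) t y \<tau> + R * (2 * (\<beta> * \<eta>) ^ 2)"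
      if "\<tau> \<in> {t + a..t + a + \<delta>}" for \<tau>
      using excitation_le_energy_on_window[OF \<open>t \<ge> 0\<close> _ that _ steady _ c] \<open>c > 0\<close> a that
        K[of "\<tau> - t" y] \<open>norm y = 1\<close>
      by (force simp: u_def R_def \<beta>_def algebra_simps)
    have "\<mu> / (4 * R * K ^ 2) = (\<mu> - R * (2 * (\<beta> * \<eta>) ^ 2) * ((t + a + \<delta>) - (t + a))) / (2 * R * K ^ 2)"
      by (simp only: add_diff_cancel_left' \<eta>_sq) (simp add: field_simps)
    also have "\<dots> \<le> integral {t..t + (Lw + \<delta>)} (output_energy C (S + N) t y)"
    proof (rule integral_lower_bound_from_window[OF _ excitation_integrable output_energy_integrable])
      show "\<mu> < integral {t + a..t + a + \<delta>} (\<lambda>\<tau>. norm (\<O> \<tau> *v u) ^ 2)"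
        using excitation[of "t + a" u] \<open>t \<ge> 0\<close> a \<open>norm u = 1\<close> by simp
    qed (use pointwise \<open>t \<ge> 0\<close> a \<delta>_pos \<open>R > 0\<close> \<open>K > 0\<close> in \<open>auto simp: output_energy_def trans_mat_def\<close>)
    finally show "\<mu> / (4 * R * K ^ 2) \<le> integral {t..t + (Lw + \<delta>)} (output_energy C (S + N) t y)" .
  qed
qed

end

theorem lemma1:
  fixes A S N :: "real^'n^'n"
    and C :: "real \<Rightarrow> real^'n^'m"
    and s :: nat
    and sel :: "'r::finite \<Rightarrow> 'm \<times> nat"
    and \<O> :: "real \<Rightarrow> real^'n^'r"
    and \<delta> \<mu> :: real
  assumes real_eig: "\<And>c. eigenvalue A c \<Longrightarrow> Im c = 0"
    and C_cont: "continuous_on {0..} C"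
    and C_bdd: "bounded (C ` {0..})"
    and decomp: "A = S + N"
    and S_diag: "diagonalizable S"
    and N_nil: "nilpotent_index N s"
    and s_le: "s \<le> CARD('n)"
    and comm: "S ** N = N ** S"
    and sel_ok: "\<And>j. snd (sel j) < s"
    and O_def: "\<And>t. \<O> t = (\<chi> j. row (fst (sel j)) (C t ** mpow N (snd (sel j))))"
    and \<delta>_pos: "\<delta> > 0" and \<mu>_pos: "\<mu> > 0"
    and pe: "\<And>t. t \<ge> 0 \<Longrightarrow>
               mat_gt (integral {t..t+\<delta>} (\<lambda>\<tau>. transpose (\<O> \<tau>) ** \<O> \<tau>)) (\<mu> *\<^sub>R mat 1)"
  shows "uniformly_observable A C"
proof -
  obtain P :: "real^'n^'n" where P: "invertible P" "\<forall>i j. i \<noteq> j \<longrightarrow> (matrix_inv P ** S ** P) $ i $ j = 0"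
    using S_diag unfolding diagonalizable_def by (elim exE conjE)
  obtain B where "B > 0" and C_bound: "\<And>\<tau> v. \<tau> \<ge> 0 \<Longrightarrow> norm (C \<tau> *v v) \<le> B * norm v"
    using bounded_matrix_family_vector_bound[OF C_bdd] by auto
  have excitation: "\<mu> < integral {t..t + \<delta>} (\<lambda>\<tau>. norm (\<O> \<tau> *v u) ^ 2)" if "t \<ge> 0" "norm u = 1" for t u
  proof (rule mat_gt_integral_gramD[OF pe[OF \<open>t \<ge> 0\<close>] _ \<open>norm u = 1\<close>])
    have "\<O> = (\<lambda>\<tau>. \<chi> j. row (fst (sel j)) (C \<tau> ** mpow N (snd (sel j))))" using O_def by blast
    then show "continuous_on {t..t + \<delta>} \<O>"
      using \<open>t \<ge> 0\<close> by (auto intro!: continuous_intros continuous_on_subset[OF C_cont])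
  qed
  interpret excited_observation S N P s C sel \<O> B \<delta> \<mu>
    using P comm N_nil C_cont C_bound \<open>B > 0\<close> sel_ok O_def excitation \<delta>_pos \<mu>_pos
    by unfold_locales (auto simp: nilpotent_index_def)
  obtain \<delta>' \<kappa> where "\<delta>' > 0" "\<kappa> > 0"
    and energy: "\<And>t y. t \<ge> 0 \<Longrightarrow> norm y = 1 \<Longrightarrow> \<kappa> \<le> integral {t..t + \<delta>'} (output_energy C (S + N) t y)"
    using energy_lower_bound by metis
  show ?thesis
    by (rule uniformly_observableI[OF C_cont \<open>\<delta>' > 0\<close> \<open>\<kappa> > 0\<close>]) (simp add: decomp energy)
qed

end
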